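(* For all types $A$, $B$, $C$: if $A \equiv C$ and $C \sim B$, then $A \simeq B$.
   Context: Types and rows share one grammar: $A,B,C,\rho ::= X \mid \alpha \mid \star \mid \iota \mid A\to B \mid \forall X{:}K.\,A \mid [\rho] \mid \langle\rho\rangle \mid \cdot \mid \ell{:}A;\rho$, where $X$ ranges over type variables (bound by $\forall$), $\alpha$ over type names, $\star$ is the dynamic type (also serving as the dynamic row), $\iota$ over base types, $[\rho]$ and $\langle\rho\rangle$ are record and variant types, $\cdot$ is the empty row, $\ell$ ranges over labels, and $K\in\{\mathsf T,\mathsf R\}$ is a kind. Types are identified up to renaming of bound variables; $\mathit{ftv}(A)$ is the set of free type variables. Row matching $\rho \triangleright_\ell A,\rho'$ is defined by: $(\ell{:}A;\rho)\triangleright_\ell A,\rho$; if $\ell'\neq\ell$ and $\rho\triangleright_\ell A,\rho'$ then $(\ell'{:}B;\rho)\triangleright_\ell A,(\ell'{:}B;\rho')$; and $\star\triangleright_\ell \star,\star$. $\mathbf{QPoly}(A)$ holds iff $A$ is not of the form $\forall X{:}K.\,B$ and $\star$ occurs in $A$. Row concatenation $\rho_1\odot\rho_2$ is defined only when $\rho_1=\ell_1{:}A_1;\dots;\ell_n{:}A_n;\cdot$, and then equals $\ell_1{:}A_1;\dots;\ell_n{:}A_n;\rho_2$. $\mathit{dom}(\rho)$ is the set of labels in the top-level label prefix of $\rho$. A row $\rho$ ends with $\star$ if $\rho=\rho'\odot\star$ for some $\rho'$. Type equivalence $\equiv$ is the least equivalence relation that is a congruence for $\to$, $\forall X{:}K.\,-$,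 $[-]$, $\langle-\rangle$ and $\ell{:}-;-$, and contains $\ell{:}A;\ell'{:}B;\rho \equiv \ell'{:}B;\ell{:}A;\rho$ whenever $\ell\neq\ell'$. Consistency $\simeq$ is defined inductively: $A\simeq A$; $\star\simeq A$; $A\simeq\star$; $A_1\to A_2\simeq B_1\to B_2$ if $A_1\simeq B_1$ and $A_2\simeq B_2$; $\forall X{:}K.A\simeq\forall X{:}K.B$ if $A\simeq B$; $\forall X{:}K.A\simeq B$ if $\mathbf{QPoly}(B)$, $X\notin\mathit{ftv}(B)$ and $A\simeq B$; $A\simeq\forall X{:}K.B$ if $\mathbf{QPoly}(A)$, $X\notin\mathit{ftv}(A)$ and $A\simeq B$; $[\rho_1]\simeq[\rho_2]$ and $\langle\rho_1\rangle\simeq\langle\rho_2\rangle$ if $\rho_1\simeq\rho_2$; $\ell{:}A;\rho_1\simeq B$ if $B\triangleright_\ell B',\rho_2$, $A\simeq B'$ and $\rho_1\simeq\rho_2$; $A\simeq \ell{:}B;\rho_2$ if $A\triangleright_\ell A',\rho_1$, $A'\simeq B$ and $\rho_1\simeq\rho_2$. The relation $\sim$ is defined inductively by the same rules as $\simeq$ for reflexivity, $\star$ on either side, $\to$, $\forall$ (all three $\forall$ rules, with $\sim$ in place of $\simeq$), records and variants, together with: $\ell{:}A;\rho_1\sim\ell{:}B;\rho_2$ if $A\sim B$ and $\rho_1\sim\rho_2$; $\ell{:}A;\rho_1\sim\rho_2$ if $\ell\notin\mathit{dom}(\rho_2)$, $\rho_2$ ends with $\star$ and $\rho_1\sim\rho_2$;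 $\rho_1\sim\ell{:}B;\rho_2$ if $\ell\notin\mathit{dom}(\rho_1)$, $\rho_1$ ends with $\star$ and $\rho_1\sim\rho_2$. *)

theory Defs
  imports Main
begin

text \<open>Types and rows share one grammar. Bound type variables X are represented
  by de Bruijn indices (so alpha-equivalent types are literally equal);
  type names, base types and labels are drawn from abstract name spaces.\<close>

datatype kind = KT | KR

type_synonym label = string

datatype ty =
    TVar nat
  | TName string
  | Dyn                      \<comment> \<open>\<star>, dynamic type / dynamic row\<close>
  | Base string
  | Arr ty ty
  | All kind ty
  | Rec ty
  | Var ty                   \<comment> \<open>\<langle>\<rho>\<rangle>\<close>
  | REmpty
  | RCons label ty ty

text \<open>Shifting free de Bruijn indices at or above c by one (used to move a type
  under a binder; the shifted type does not contain the new bound variable free).\<close>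
fun lift :: "nat \<Rightarrow> ty \<Rightarrow> ty" where
  "lift c (TVar n) = (if n < c then TVar n else TVar (Suc n))"
| "lift c (TName a) = TName a"
| "lift c Dyn = Dyn"
| "lift c (Base i) = Base i"
| "lift c (Arr A B) = Arr (lift c A) (lift c B)"
| "lift c (All K A) = All K (lift (Suc c) A)"
| "lift c (Rec r) = Rec (lift c r)"
| "lift c (Var r) = Var (lift c r)"
| "lift c REmpty = REmpty"
| "lift c (RCons l A r) = RCons l (lift c A) (lift c r)"

fun has_dyn :: "ty \<Rightarrow> bool" where
  "has_dyn (TVar n) = False"
| "has_dyn (TName a) = False"
| "has_dyn Dyn = True"
| "has_dyn (Base i) = False"
| "has_dyn (Arr A B) = (has_dyn A \<or> has_dyn B)"
| "has_dyn (All K A) = has_dyn A"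
| "has_dyn (Rec r) = has_dyn r"
| "has_dyn (Var r) = has_dyn r"
| "has_dyn REmpty = False"
| "has_dyn (RCons l A r) = (has_dyn A \<or> has_dyn r)"

definition QPoly :: "ty \<Rightarrow> bool" where
  "QPoly A \<longleftrightarrow> (\<nexists>K B. A = All K B) \<and> has_dyn A"

inductive rmatch :: "ty \<Rightarrow> label \<Rightarrow> ty \<Rightarrow> ty \<Rightarrow> bool" where
  rm_head: "rmatch (RCons l A r) l A r"
| rm_skip: "l' \<noteq> l \<Longrightarrow> rmatch r l A r' \<Longrightarrow> rmatch (RCons l' B r) l A (RCons l' B r')"
| rm_dyn:  "rmatch Dyn l Dyn Dyn"

fun closed_row :: "ty \<Rightarrow> bool" where
  "closed_row REmpty = True"
| "closed_row (RCons l A r) = closed_row r"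
| "closed_row _ = False"

fun rconcat :: "ty \<Rightarrow> ty \<Rightarrow> ty" where
  "rconcat REmpty r2 = r2"
| "rconcat (RCons l A r) r2 = RCons l A (rconcat r r2)"
| "rconcat r r2 = undefined"

definition ends_dyn :: "ty \<Rightarrow> bool" where
  "ends_dyn r \<longleftrightarrow> (\<exists>r'. closed_row r' \<and> r = rconcat r' Dyn)"

fun rdom :: "ty \<Rightarrow> label set" where
  "rdom (RCons l A r) = insert l (rdom r)"
| "rdom _ = {}"

inductive tequiv :: "ty \<Rightarrow> ty \<Rightarrow> bool" where
  eq_refl: "tequiv A A"
| eq_sym: "tequiv A B \<Longrightarrow> tequiv B A"
| eq_trans: "tequiv A B \<Longrightarrow> tequiv B C \<Longrightarrow> tequiv A C"
| eq_arr: "tequiv A1 B1 \<Longrightarrow> tequiv A2 B2 \<Longrightarrow> tequiv (Arr A1 A2) (Arr B1 B2)"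
| eq_all: "tequiv A B \<Longrightarrow> tequiv (All K A) (All K B)"
| eq_rec: "tequiv A B \<Longrightarrow> tequiv (Rec A) (Rec B)"
| eq_var: "tequiv A B \<Longrightarrow> tequiv (Var A) (Var B)"
| eq_rcons: "tequiv A B \<Longrightarrow> tequiv r1 r2 \<Longrightarrow> tequiv (RCons l A r1) (RCons l B r2)"
| eq_swap: "l \<noteq> l' \<Longrightarrow> tequiv (RCons l A (RCons l' B r)) (RCons l' B (RCons l A r))"

text \<open>Consistency \<simeq>. In the \<forall>-vs-non-\<forall> rules, the side condition X \<notin> ftv(B)
  is realised by lifting B under the binder.\<close>
inductive consist :: "ty \<Rightarrow> ty \<Rightarrow> bool" where
  c_refl: "consist A A"
| c_dynL: "consist Dyn A"
| c_dynR: "consist A Dyn"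
| c_arr: "consist A1 B1 \<Longrightarrow> consist A2 B2 \<Longrightarrow> consist (Arr A1 A2) (Arr B1 B2)"
| c_all: "consist A B \<Longrightarrow> consist (All K A) (All K B)"
| c_allL: "QPoly B \<Longrightarrow> consist A (lift 0 B) \<Longrightarrow> consist (All K A) B"
| c_allR: "QPoly A \<Longrightarrow> consist (lift 0 A) B \<Longrightarrow> consist A (All K B)"
| c_rec: "consist r1 r2 \<Longrightarrow> consist (Rec r1) (Rec r2)"
| c_var: "consist r1 r2 \<Longrightarrow> consist (Var r1) (Var r2)"
| c_rowL: "rmatch B l B' r2 \<Longrightarrow> consist A B' \<Longrightarrow> consist r1 r2 \<Longrightarrow> consist (RCons l A r1) B"
| c_rowR: "rmatch A l A' r1 \<Longrightarrow> consist A' B \<Longrightarrow> consist r1 r2 \<Longrightarrow> consist A (RCons l B r2)"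

inductive sim :: "ty \<Rightarrow> ty \<Rightarrow> bool" where
  s_refl: "sim A A"
| s_dynL: "sim Dyn A"
| s_dynR: "sim A Dyn"
| s_arr: "sim A1 B1 \<Longrightarrow> sim A2 B2 \<Longrightarrow> sim (Arr A1 A2) (Arr B1 B2)"
| s_all: "sim A B \<Longrightarrow> sim (All K A) (All K B)"
| s_allL: "QPoly B \<Longrightarrow> sim A (lift 0 B) \<Longrightarrow> sim (All K A) B"
| s_allR: "QPoly A \<Longrightarrow> sim (lift 0 A) B \<Longrightarrow> sim A (All K B)"
| s_rec: "sim r1 r2 \<Longrightarrow> sim (Rec r1) (Rec r2)"
| s_var: "sim r1 r2 \<Longrightarrow> sim (Var r1) (Var r2)"
| s_cons: "sim A B \<Longrightarrow> sim r1 r2 \<Longrightarrow> sim (RCons l A r1) (RCons l B r2)"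
| s_consL: "l \<notin> rdom r2 \<Longrightarrow> ends_dyn r2 \<Longrightarrow> sim r1 r2 \<Longrightarrow> sim (RCons l A r1) r2"
| s_consR: "l \<notin> rdom r1 \<Longrightarrow> ends_dyn r1 \<Longrightarrow> sim r1 r2 \<Longrightarrow> sim r1 (RCons l B r2)"

end

theory Submission
  imports Defs
begin

text \<open>Equivalent types have the same outer
  constructor with equivalent components, and matching a label in equivalent rows gives
  equivalent results, so every rule of \<sim> that is also a rule of \<simeq> transfers directly;
  reflexivity is covered by \<equiv> \<subseteq> \<simeq>. The one rule without a counterpart drops a field
  \<ell> of the left row against an open row \<rho> lacking \<ell>. Matching \<ell> in \<rho> yields \<star> and \<rho>
  itself, and the field, which in the row equivalent to the left one may sit deeper, is brought to the
  front by induction on the consistency derivation of the remaining row: matches on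
  distinct labels commute.\<close>

text \<open>No symmetric case is needed: \<equiv> is symmetric and every generating rule is closed
  under exchanging its two sides.\<close>

lemma tequiv_symmetric_induct [consumes 1, case_names refl trans arr all rec var rcons swap]:
  assumes "tequiv X Y"
    and refl: "\<And>A. P A A"
    and trans: "\<And>A B C. P A B \<Longrightarrow> P B C \<Longrightarrow> P A C"
    and arr: "\<And>A1 B1 A2 B2. tequiv A1 B1 \<Longrightarrow> P A1 B1 \<Longrightarrow> tequiv A2 B2 \<Longrightarrow> P A2 B2 \<Longrightarrow>
      P (Arr A1 A2) (Arr B1 B2)"
    and all: "\<And>A B K. tequiv A B \<Longrightarrow> P A B \<Longrightarrow> P (All K A) (All K B)"
    and rec: "\<And>A B. tequiv A B \<Longrightarrow> P A B \<Longrightarrow> P (Rec A) (Rec B)"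
    and var: "\<And>A B. tequiv A B \<Longrightarrow> P A B \<Longrightarrow> P (Var A) (Var B)"
    and rcons: "\<And>A B r1 r2 l. tequiv A B \<Longrightarrow> P A B \<Longrightarrow> tequiv r1 r2 \<Longrightarrow> P r1 r2 \<Longrightarrow>
      P (RCons l A r1) (RCons l B r2)"
    and swap: "\<And>l l' A B r. l \<noteq> l' \<Longrightarrow> P (RCons l A (RCons l' B r)) (RCons l' B (RCons l A r))"
  shows "P X Y"
proof -
  from assms(1) have "P X Y \<and> P Y X"
  proof (induction rule: tequiv.induct)
    case (eq_arr A1 B1 A2 B2)
    with tequiv.eq_sym show ?case by (blast intro: arr)
  next
    case (eq_all A B K)
    with tequiv.eq_sym show ?case by (blast intro: all)
  next
    case (eq_rec A B)
    with tequiv.eq_sym show ?case by (blast intro: rec)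
  next
    case (eq_var A B)
    with tequiv.eq_sym show ?case by (blast intro: var)
  next
    case (eq_rcons A B r1 r2 l)
    with tequiv.eq_sym show ?case by (blast intro: rcons)
  next
    case (eq_swap l l' A B r)
    then show ?case by (simp add: swap)
  qed (blast intro: refl trans)+
  then show ?thesis ..
qed

text \<open>For rows only the outer constructor is recorded; their fields are compared through
  row matching.\<close>

fun head_tequiv :: "ty \<Rightarrow> ty \<Rightarrow> bool" where
  "head_tequiv (Arr A1 A2) (Arr B1 B2) \<longleftrightarrow> tequiv A1 B1 \<and> tequiv A2 B2"
| "head_tequiv (All K A) (All K' B) \<longleftrightarrow> K = K' \<and> tequiv A B"
| "head_tequiv (Rec A) (Rec B) \<longleftrightarrow> tequiv A B"
| "head_tequiv (Var A) (Var B) \<longleftrightarrow> tequiv A B"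
| "head_tequiv (RCons _ _ _) (RCons _ _ _) \<longleftrightarrow> True"
| "head_tequiv A B \<longleftrightarrow> A = B"

lemma head_tequiv_trans: "head_tequiv A B \<Longrightarrow> head_tequiv B C \<Longrightarrow> head_tequiv A C"
  by (induction A B rule: head_tequiv.induct; cases C) (auto intro: tequiv.eq_trans)

lemma tequiv_head_tequiv: "tequiv X Y \<Longrightarrow> head_tequiv X Y"
proof (induction rule: tequiv_symmetric_induct)
  case (refl A)
  then show ?case by (cases A) (auto intro: tequiv.eq_refl)
next
  case (trans A B C)
  then show ?case by (rule head_tequiv_trans)
qed simp_all

lemma tequiv_Arr_iff:
  "tequiv X (Arr B1 B2) \<longleftrightarrow> (\<exists>A1 A2. X = Arr A1 A2 \<and> tequiv A1 B1 \<and> tequiv A2 B2)"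
  by (cases X) (auto dest: tequiv_head_tequiv intro: tequiv.eq_arr)

lemma tequiv_All_iff: "tequiv X (All K B) \<longleftrightarrow> (\<exists>A. X = All K A \<and> tequiv A B)"
  by (cases X) (auto dest: tequiv_head_tequiv intro: tequiv.eq_all)

lemma tequiv_Rec_iff: "tequiv X (Rec B) \<longleftrightarrow> (\<exists>A. X = Rec A \<and> tequiv A B)"
  by (cases X) (auto dest: tequiv_head_tequiv intro: tequiv.eq_rec)

lemma tequiv_Var_iff: "tequiv X (Var B) \<longleftrightarrow> (\<exists>A. X = Var A \<and> tequiv A B)"
  by (cases X) (auto dest: tequiv_head_tequiv intro: tequiv.eq_var)

lemma tequiv_Dyn_iff: "tequiv X Dyn \<longleftrightarrow> X = Dyn"
  by (cases X) (auto dest: tequiv_head_tequiv intro: tequiv.eq_refl)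

lemma tequiv_has_dyn: "tequiv X Y \<Longrightarrow> has_dyn X = has_dyn Y"
  by (induction rule: tequiv_symmetric_induct) auto

lemma tequiv_QPoly: "tequiv X Y \<Longrightarrow> QPoly Y \<Longrightarrow> QPoly X"
  unfolding QPoly_def by (metis tequiv_All_iff tequiv.eq_sym tequiv_has_dyn)

lemma tequiv_lift: "tequiv X Y \<Longrightarrow> tequiv (lift c X) (lift c Y)"
proof (induction arbitrary: c rule: tequiv_symmetric_induct)
  case (trans A B C)
  then show ?case by (blast intro: tequiv.eq_trans)
qed (simp_all add: tequiv.eq_refl tequiv.eq_arr tequiv.eq_all tequiv.eq_rec tequiv.eq_var
      tequiv.eq_rcons tequiv.eq_swap)

lemma rmatch_tequiv:
  assumes "tequiv X Y" and "rmatch Y l b s"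
  shows "\<exists>a r. rmatch X l a r \<and> tequiv a b \<and> tequiv r s"
  using assms
proof (induction arbitrary: l b s rule: tequiv_symmetric_induct)
  case (refl A)
  then show ?case by (blast intro: tequiv.eq_refl)
next
  case (trans A B C)
  then show ?case by (meson tequiv.eq_trans)
next
  case (rcons A B r1 r2 m)
  from rcons.prems show ?case
  proof cases
    case rm_head
    with rcons.hyps show ?thesis by (blast intro: rmatch.rm_head)
  next
    case (rm_skip s')
    with rcons.IH(2) obtain a r where "rmatch r1 l a r" "tequiv a b" "tequiv r s'"
      by blast
    with rm_skip rcons.hyps show ?thesis by (blast intro: rmatch.rm_skip tequiv.eq_rcons)
  qed
next
  case (swap m m' A B r)
  from swap.prems show ?case
  proof cases
    case rm_head
    with swap.hyps show ?thesis by (blast intro: rmatch.intros tequiv.intros)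
  next
    case (rm_skip s')
    from rm_skip(3) show ?thesis
    proof cases
      case rm_head
      with rm_skip show ?thesis by (blast intro: rmatch.intros tequiv.intros)
    next
      case (rm_skip s'')
      with \<open>s = RCons m' B s'\<close> \<open>m' \<noteq> l\<close> swap.hyps show ?thesis
        by (blast intro: rmatch.intros tequiv.intros)
    qed
  qed
qed (auto elim: rmatch.cases)

lemma ends_dyn_Dyn [simp]: "ends_dyn Dyn"
  unfolding ends_dyn_def by (metis closed_row.simps(1) rconcat.simps(1))

lemma ends_dyn_RCons [simp]: "ends_dyn (RCons l A r) \<longleftrightarrow> ends_dyn r"
proof
  assume "ends_dyn (RCons l A r)"
  then obtain r' where "closed_row r'" "RCons l A r = rconcat r' Dyn"
    unfolding ends_dyn_def by blast
  then show "ends_dyn r"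
    unfolding ends_dyn_def by (cases r') auto
next
  assume "ends_dyn r"
  then obtain r' where "closed_row r'" "r = rconcat r' Dyn"
    unfolding ends_dyn_def by blast
  then have "closed_row (RCons l A r')" "RCons l A r = rconcat (RCons l A r') Dyn"
    by simp_all
  then show "ends_dyn (RCons l A r)"
    unfolding ends_dyn_def by blast
qed

lemma ends_dyn_cases: "ends_dyn r \<Longrightarrow> r = Dyn \<or> (\<exists>l A r'. r = RCons l A r')"
  unfolding ends_dyn_def by (metis closed_row.elims(2) rconcat.simps(1,2))

lemma ends_dyn_rmatch_Dyn: "ends_dyn r \<Longrightarrow> l \<notin> rdom r \<Longrightarrow> rmatch r l Dyn r"
  by (induction r) (auto intro: rmatch.intros dest: ends_dyn_cases)

lemma rmatch_ends_dyn: "rmatch r l A r' \<Longrightarrow> ends_dyn r \<Longrightarrow> ends_dyn r'"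
  by (induction rule: rmatch.induct) auto

lemma rmatch_rdom: "rmatch r l A r' \<Longrightarrow> rdom r' \<subseteq> rdom r"
  by (induction rule: rmatch.induct) auto

lemma rmatch_size: "rmatch r l A r' \<Longrightarrow> size r' \<le> size r"
  by (induction rule: rmatch.induct) auto

lemma rmatch_commute:
  assumes "rmatch r l A r'" and "rmatch r' m B r''" and "m \<noteq> l"
  shows "\<exists>s. rmatch r m B s \<and> rmatch s l A r''"
  using assms
proof (induction arbitrary: r'' rule: rmatch.induct)
  case (rm_head l A r)
  then show ?case by (blast intro: rmatch.intros)
next
  case (rm_skip k l r A r' C)
  from rm_skip.prems(1) show ?case
  proof cases
    case rm_head
    with rm_skip.hyps show ?thesis by (blast intro: rmatch.intros)
  next
    case (rm_skip s')
    with rm_skip.IH rm_skip.prems(2) rm_skip.hyps(1) show ?thesis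
      by (blast intro: rmatch.rm_skip)
  qed
next
  case (rm_dyn l)
  then show ?case by (auto elim: rmatch.cases intro: rmatch.rm_dyn)
qed

lemma consist_rmatch_open_row_self:
  "rmatch A l A' B \<Longrightarrow> ends_dyn B \<Longrightarrow> l \<notin> rdom B \<Longrightarrow> consist A B"
proof (induction rule: rmatch.induct)
  case (rm_head l A r)
  then show ?case by (blast intro: consist.c_rowL consist.c_dynR consist.c_refl ends_dyn_rmatch_Dyn)
next
  case (rm_skip m l r A r' X)
  then show ?case by (auto intro: consist.c_rowL rmatch.rm_head consist.c_refl)
qed (rule consist.c_dynL)

lemma consist_rmatch_open_row:
  assumes "rmatch A l A' r" and "consist r B" and "ends_dyn B" and "l \<notin> rdom B"
  shows "consist A B"
  using assms
proof (induction "size A + size B" arbitrary: A A' r B rule: less_induct)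
  case less
  from less.prems(1) show ?case
  proof cases
    case rm_head
    with less.prems(2-4) show ?thesis
      by (blast intro: consist.c_rowL consist.c_dynR ends_dyn_rmatch_Dyn)
  next
    case rm_dyn
    then show ?thesis by (simp add: consist.c_dynL)
  next
    case (rm_skip m s s' X)
    from less.prems(2) rm_skip have "consist (RCons m X s') B" by simp
    then show ?thesis
    proof cases
      case c_refl
      with less.prems(1,3,4) rm_skip show ?thesis by (simp add: consist_rmatch_open_row_self)
    next
      case c_dynR
      then show ?thesis by (simp add: consist.c_dynR)
    next
      case c_allR
      with less.prems(3) show ?thesis by (auto dest: ends_dyn_cases)
    next
      case (c_rowL B' r2)
      have "consist s r2"
        using less.hyps[of s r2 A' s'] rm_skip c_rowL less.prems(3,4)
          rmatch_ends_dyn[of B m B' r2] rmatch_rdom[of B m B' r2] rmatch_size[of B m B' r2]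
        by auto
      with rm_skip c_rowL show ?thesis by (simp add: consist.c_rowL)
    next
      case (c_rowR n Z t Y r2)
      with less.prems(4) have "n \<noteq> l" by auto
      moreover from rm_skip c_rowR have "rmatch r n Z t" by simp
      ultimately obtain s'' where "rmatch A n Z s''" "rmatch s'' l A' t"
        using rmatch_commute[OF less.prems(1)] by blast
      moreover have "consist s'' r2"
        using less.hyps[of s'' r2 A' t] less.prems(3,4) c_rowR rmatch_size[OF \<open>rmatch A n Z s''\<close>]
          \<open>rmatch s'' l A' t\<close> by simp
      ultimately show ?thesis using c_rowR by (simp add: consist.c_rowR)
    qed
  qed
qed

lemma tequiv_consist: "tequiv A B \<Longrightarrow> consist A B"
proof (induction "size B" arbitrary: A B rule: less_induct)
  case less
  show ?case
  proof (cases B)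
    case (Arr B1 B2)
    with less show ?thesis by (auto simp: tequiv_Arr_iff intro: consist.c_arr)
  next
    case (All K B1)
    with less show ?thesis by (auto simp: tequiv_All_iff intro: consist.c_all)
  next
    case (Rec B1)
    with less show ?thesis by (auto simp: tequiv_Rec_iff intro: consist.c_rec)
  next
    case (Var B1)
    with less show ?thesis by (auto simp: tequiv_Var_iff intro: consist.c_var)
  next
    case (RCons l B1 s)
    with less.prems obtain A1 r where "rmatch A l A1 r" "tequiv A1 B1" "tequiv r s"
      using rmatch_tequiv by (blast intro: rmatch.rm_head)
    with less RCons show ?thesis by (auto intro: consist.c_rowR)
  qed (use less.prems in \<open>cases A; auto dest!: tequiv_head_tequiv intro: consist.c_refl\<close>)+
qed

theorem mainTheorem3:
  fixes A B C :: ty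
  assumes "tequiv A C" and "sim C B"
  shows "consist A B"
  using assms(2,1)
proof (induction arbitrary: A rule: sim.induct)
  case (s_refl C)
  then show ?case by (rule tequiv_consist)
next
  case (s_allL B A1 K)
  then show ?case by (auto simp: tequiv_All_iff intro: consist.c_allL)
next
  case (s_allR A1 B K)
  then show ?case by (blast intro: consist.c_allR tequiv_QPoly tequiv_lift)
next
  case (s_cons A1 B1 r1 r2 l)
  then obtain a r where "rmatch A l a r" "tequiv a A1" "tequiv r r1"
    using rmatch_tequiv rmatch.rm_head by blast
  with s_cons.IH show ?case by (blast intro: consist.c_rowR)
next
  case (s_consL l r2 r1 A1)
  then obtain a r where "rmatch A l a r" "tequiv r r1"
    using rmatch_tequiv rmatch.rm_head by blast
  with s_consL show ?case by (blast intro: consist_rmatch_open_row)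
next
  case (s_consR l r1 r2 B1)
  then obtain a r where "rmatch A l a r" "tequiv a Dyn" "tequiv r r1"
    using rmatch_tequiv ends_dyn_rmatch_Dyn by blast
  with s_consR.IH show ?case by (auto simp: tequiv_Dyn_iff intro: consist.c_rowR consist.c_dynL)
qed (auto simp: tequiv_Arr_iff tequiv_All_iff tequiv_Rec_iff tequiv_Var_iff tequiv_Dyn_iff
      intro: consist.intros)

end
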